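(* Let $d\ge2$ and let $\{U^{(a)}_j\}_{j=0}^{d^2-1}$, $a=0,\dots,d^2-2$, be a complete set of mutually unbiased unitary-operator bases for $\operatorname{End}(\mathbb{C}^d)$ (i.e. $d^2-1$ unitary operator bases, pairwise mutually unbiased). Then the collection of all $d^2(d^2-1)$ operators, taken as elements of $\operatorname{PU}(d)$ and each given weight $1/(d^2(d^2-1))$, forms a weighted unitary $2$-design; that is, $$\frac{1}{d^2(d^2-1)}\sum_{a=0}^{d^2-2}\sum_{j=0}^{d^2-1}U^{(a)}_j\otimes U^{(a)}_j\otimes U^{(a)\dagger}_j\otimes U^{(a)\dagger}_j=\int_{\operatorname{PU}(d)}d\mu(x)\,U(x)^{\otimes2}\otimes(U(x)^{\otimes2})^\dagger.$$
   Context: A unitary operator basis for $\operatorname{End}(\mathbb{C}^d)$ is a set $\{U_j\}_{j=0}^{d^2-1}\subset\operatorname{U}(d)$ with $\operatorname{tr}(U_j^\dagger U_k)=d\,\delta_{jk}$. Two unitary operator bases $\{U_j\}$, $\{V_k\}$ are mutually unbiased if $|\operatorname{tr}(U_j^\dagger V_k)|^2=1$ for all $j,k$. $\mu$ is the Haar probability measure on $\operatorname{PU}(d)=\operatorname{U}(d)/\operatorname{U}(1)$ and $U(x)$ a representative of $x$. *)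

theory Defs
  imports "HOL-Analysis.Analysis" "HOL-Probability.Probability"
begin

text \<open>d x d complex matrices are modelled as complex^'n^'n with d = CARD('n).\<close>

definition cadj :: "complex^'n^'n \<Rightarrow> complex^'n^'n" where
  "cadj A = (\<chi> i j. cnj (A $ j $ i))"

definition unitary_mat :: "complex^'n^'n \<Rightarrow> bool" where
  "unitary_mat A \<longleftrightarrow> cadj A ** A = mat 1 \<and> A ** cadj A = mat 1"

definition unitary_operator_basis :: "(nat \<Rightarrow> complex^'n^'n) \<Rightarrow> bool" where
  "unitary_operator_basis U \<longleftrightarrow>
     (\<forall>j < CARD('n)^2. unitary_mat (U j)) \<and>
     (\<forall>j < CARD('n)^2. \<forall>k < CARD('n)^2.
        trace (cadj (U j) ** U k) = (if j = k then of_nat CARD('n) else 0))"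

definition mutually_unbiased :: "(nat \<Rightarrow> complex^'n^'n) \<Rightarrow> (nat \<Rightarrow> complex^'n^'n) \<Rightarrow> bool" where
  "mutually_unbiased U V \<longleftrightarrow>
     (\<forall>j < CARD('n)^2. \<forall>k < CARD('n)^2. (cmod (trace (cadj (U j) ** V k)))^2 = 1)"

text \<open>Entries of the 4-fold Kronecker product A \<otimes> B \<otimes> C \<otimes> D: row multi-index (i1,i2,i3,i4),
  column multi-index (j1,j2,j3,j4).\<close>
definition tensor4_entry ::
  "complex^'n^'n \<Rightarrow> complex^'n^'n \<Rightarrow> complex^'n^'n \<Rightarrow> complex^'n^'n
   \<Rightarrow> 'n \<times> 'n \<times> 'n \<times> 'n \<Rightarrow> 'n \<times> 'n \<times> 'n \<times> 'n \<Rightarrow> complex" where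
  "tensor4_entry A B C D = (\<lambda>(i1,i2,i3,i4) (j1,j2,j3,j4).
      A $ i1 $ j1 * B $ i2 $ j2 * C $ i3 $ j3 * D $ i4 $ j4)"

definition haar_unitary :: "(complex^'n^'n) measure \<Rightarrow> bool" where
  "haar_unitary M \<longleftrightarrow>
     prob_space M \<and> sets M = sets borel \<and>
     emeasure M {A. unitary_mat A} = 1 \<and>
     (\<forall>V. unitary_mat V \<longrightarrow> distr M borel (\<lambda>A. V ** A) = M)"

end

theory Submission
  imports Defs
begin

text \<open>
  Write \<rho>(X) = X \<otimes> X \<otimes> conj X \<otimes> conj X, a matrix indexed by 4-tuples; the entries of
  X \<otimes> X \<otimes> X\<dagger> \<otimes> X\<dagger> are a re-indexing of those of \<rho>(X), so the claim is the
  equality of the Haar average P = \<integral> \<rho>(X) d\<mu>(X) and the design average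
  T = (1/|S|) \<Sum>x\<in>S. \<rho>(W x) over the d^2 (d^2 - 1) operators W x of the bases.

  The proof is the frame-potential argument for the Hilbert-Schmidt inner product
  \<langle>A, B\<rangle> = tr(A\<dagger> B).  As \<rho> is multiplicative and \<mu> is invariant, P is an orthogonal
  projection with \<langle>\<rho>(X), P\<rangle> = \<langle>P, \<rho>(X)\<rangle> = tr P for unitary X, hence
  \<langle>T, P\<rangle> = \<langle>P, T\<rangle> = tr P.  P fixes two orthogonal vectors (coming from the identity
  and the swap pairing of the tensor factors), so tr P \<ge> 2.  On the other hand
  \<langle>\<rho>(X), \<rho>(Y)\<rangle> = |tr(X\<dagger> Y)|^4, and the basis and unbiasedness conditions give the
  frame potential \<langle>T, T\<rangle> = 2.  Hence \<langle>T - P, T - P\<rangle> = 2 - tr P \<le> 0, i.e. T = P.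
\<close>

section \<open>Adjoints, unitaries and the Hilbert-Schmidt inner product\<close>

lemma cadj_nth [simp]: "cadj A $ i $ j = cnj (A $ j $ i)"
  by (simp add: cadj_def)

lemma cadj_cadj [simp]: "cadj (cadj A) = A"
  by (simp add: vec_eq_iff)

lemma cadj_mult: "cadj (A ** B) = cadj B ** cadj A"
  by (simp add: vec_eq_iff matrix_matrix_mult_def mult.commute)

lemma cadj_diff: "cadj (A - B) = cadj A - cadj B"
  by (simp add: vec_eq_iff)

lemma unitary_cadj: "unitary_mat X \<Longrightarrow> unitary_mat (cadj X)"
  by (simp add: unitary_mat_def)

lemma unitary_rows:
  assumes "unitary_mat X"
  shows "(\<Sum>k\<in>UNIV. X$i$k * cnj (X$j$k)) = (if i = j then 1 else 0)"
proof -
  have "(X ** cadj X) $ i $ j = mat 1 $ i $ j" using assms by (simp add: unitary_mat_def)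
  then show ?thesis by (simp add: matrix_matrix_mult_def mat_def)
qed

lemma cmod_sq_cnj: "(complex_of_real (cmod z))^2 = cnj z * z"
  using complex_norm_square[of z] by (simp add: mult.commute)

lemma unitary_entry_le:
  assumes "unitary_mat X"
  shows "cmod (X$i$j) \<le> 1"
proof -
  have "(\<Sum>k\<in>UNIV. X$i$k * cnj (X$i$k)) = 1" using unitary_rows[OF assms, of i i] by simp
  then have "complex_of_real (\<Sum>k\<in>UNIV. (cmod (X$i$k))^2) = 1"
    by (simp add: cmod_sq_cnj mult.commute)
  then have "(\<Sum>k\<in>UNIV. (cmod (X$i$k))^2) = 1" using of_real_eq_1_iff by blast
  moreover have "(cmod (X$i$j))^2 \<le> (\<Sum>k\<in>UNIV. (cmod (X$i$k))^2)"
    by (rule member_le_sum) auto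
  ultimately show ?thesis by (simp add: power_le_one_iff abs_le_square_iff)
qed

lemma mat_diff_left: "(A::'a::ring_1^'n::finite^'m) ** (B - C) = A ** B - A ** (C::'a^'p^'n)"
  by (simp add: vec_eq_iff matrix_matrix_mult_def sum_subtractf algebra_simps)

lemma mat_diff_right: "((A::'a::ring_1^'n::finite^'m) - B) ** C = A ** C - B ** (C::'a^'p^'n)"
  by (simp add: vec_eq_iff matrix_matrix_mult_def sum_subtractf algebra_simps)

lemma trace_diff: "trace (A - B) = trace A - trace (B::'a::ring_1^'n^'n)"
  by (simp add: trace_def sum_subtractf)

definition hs :: "complex^'k^'k \<Rightarrow> complex^'k^'k \<Rightarrow> complex" where
  "hs A B = (\<Sum>i\<in>UNIV. \<Sum>j\<in>UNIV. cnj (A$i$j) * B$i$j)"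

lemma hs_trace: "hs A B = trace (cadj A ** B)"
  unfolding hs_def trace_def matrix_matrix_mult_def by (simp, rule sum.swap)

lemma hs_diff: "hs (A - B) (C - D) = hs A C - hs A D - hs B C + hs (B::complex^'k::finite^'k) D"
  by (simp add: hs_def algebra_simps sum_subtractf sum.distrib)

lemma hs_self: "hs A A = complex_of_real (\<Sum>i\<in>UNIV. \<Sum>j\<in>UNIV. (cmod (A$i$j))^2)"
  by (simp add: hs_def cmod_sq_cnj)

lemma hs_self_nonpos_imp_zero:
  assumes "hs A A = complex_of_real r" "r \<le> 0"
  shows "A = 0"
proof -
  let ?s = "\<Sum>i\<in>UNIV. \<Sum>j\<in>UNIV. (cmod (A$i$j))^2"
  have "?s = r" using assms(1) hs_self[of A] of_real_eq_iff by metis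
  moreover have "0 \<le> ?s" by (intro sum_nonneg) simp
  ultimately have "?s = 0" using assms(2) by linarith
  then have "\<forall>i j. (cmod (A$i$j))^2 = 0" by (simp add: sum_nonneg_eq_0_iff sum_nonneg)
  then show ?thesis by (simp add: vec_eq_iff)
qed

section \<open>Orthogonal projections\<close>

definition orth_proj :: "complex^'k^'k \<Rightarrow> bool" where
  "orth_proj P \<longleftrightarrow> cadj P = P \<and> P ** P = P"

lemma orth_proj_hs_self: "orth_proj P \<Longrightarrow> hs P P = trace P"
  by (simp add: orth_proj_def hs_trace)

definition vinner :: "complex^'k \<Rightarrow> complex^'k \<Rightarrow> complex" where
  "vinner s t = (\<Sum>k\<in>UNIV. cnj (s$k) * t$k)"

lemma vinner_self_nonzero:
  assumes "s \<noteq> (0::complex^'k::finite)"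
  shows "vinner s s \<noteq> 0"
proof
  assume "vinner s s = 0"
  moreover have "vinner s s = complex_of_real (\<Sum>k\<in>UNIV. (cmod (s$k))^2)"
    by (simp add: vinner_def cmod_sq_cnj)
  ultimately have "(\<Sum>k\<in>UNIV. (cmod (s$k))^2) = 0"
    using of_real_eq_0_iff by metis
  then have "\<forall>k. (cmod (s$k))^2 = 0"
    by (simp add: sum_nonneg_eq_0_iff)
  then show False using assms by (simp add: vec_eq_iff)
qed

definition outer :: "complex^'k \<Rightarrow> complex^'k^'k" where
  "outer s = (\<chi> i j. s$i * cnj (s$j) / vinner s s)"

lemma orth_proj_deflate:
  fixes P :: "complex^'k::finite^'k"
  assumes hP: "orth_proj P" and Ps: "P *v s = s" and s0: "s \<noteq> 0"
  shows "orth_proj (P - outer s)" "trace (P - outer s) = trace P - 1"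
    "\<And>t. P *v t = t \<Longrightarrow> vinner s t = 0 \<Longrightarrow> (P - outer s) *v t = t"
proof -
  define a where "a = vinner s s"
  have a0: "a \<noteq> 0" using vinner_self_nonzero[OF s0] by (simp add: a_def)
  have aeq: "a = (\<Sum>k\<in>UNIV. cnj (s$k) * s$k)" by (simp add: a_def vinner_def)
  have a_real: "cnj a = a" by (simp add: aeq mult.commute)
  have cO: "cadj (outer s) = outer s"
    using a_real by (simp add: vec_eq_iff outer_def a_def[symmetric] mult.commute)
  have cP: "cadj P = P" and PP: "P ** P = P" using hP by (auto simp: orth_proj_def)
  have PO: "P ** outer s = outer s"
  proof -
    have "(P ** outer s)$i$j = outer s $i$j" for i j
    proof -
      have "(P ** outer s)$i$j = (\<Sum>k\<in>UNIV. P$i$k * s$k) * cnj (s$j) / a"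
        by (simp add: matrix_matrix_mult_def outer_def a_def sum_distrib_right
            sum_divide_distrib mult.assoc)
      also have "(\<Sum>k\<in>UNIV. P$i$k * s$k) = s$i" using Ps
        by (simp add: vec_eq_iff matrix_vector_mult_def)
      finally show ?thesis by (simp add: outer_def a_def)
    qed
    then show ?thesis by (simp add: vec_eq_iff)
  qed
  have OP: "outer s ** P = outer s"
    by (metis cO cP PO cadj_mult)
  have OO: "outer s ** outer s = outer s"
  proof -
    have "(outer s ** outer s)$i$j = outer s $i$j" for i j
    proof -
      have "(outer s ** outer s)$i$j = s$i * (\<Sum>k\<in>UNIV. cnj (s$k) * s$k) * cnj (s$j) / (a * a)"
        by (simp add: matrix_matrix_mult_def outer_def a_def sum_distrib_right
            sum_distrib_left sum_divide_distrib algebra_simps)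
      also have "\<dots> = outer s $i$j" using a0 by (simp add: aeq[symmetric] outer_def a_def)
      finally show ?thesis .
    qed
    then show ?thesis by (simp add: vec_eq_iff)
  qed
  show "orth_proj (P - outer s)"
    unfolding orth_proj_def
    by (simp add: cadj_diff cO cP mat_diff_left mat_diff_right PP PO OP OO)
  have "trace (outer s) = (\<Sum>i\<in>UNIV. cnj (s$i) * s$i) / a"
    by (simp add: trace_def outer_def a_def sum_divide_distrib mult.commute)
  then have "trace (outer s) = 1" using a0 by (simp add: aeq[symmetric])
  then show "trace (P - outer s) = trace P - 1" by (simp add: trace_diff)
  fix t assume Pt: "P *v t = t" and st: "vinner s t = 0"
  have "(outer s *v t)$i = s$i * vinner s t / a" for i
    by (simp add: matrix_vector_mult_def outer_def vinner_def a_def sum_distrib_left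
        sum_divide_distrib algebra_simps)
  then have "outer s *v t = 0" using st by (simp add: vec_eq_iff)
  then show "(P - outer s) *v t = t" using Pt
    by (simp add: matrix_vector_mult_def vec_eq_iff sum_subtractf algebra_simps)
qed

lemma orth_proj_trace_ge_2:
  fixes P :: "complex^'k::finite^'k"
  assumes hP: "orth_proj P" and Ps: "P *v s = s" and Pt: "P *v t = t"
    and s0: "s \<noteq> 0" and t0: "t \<noteq> 0" and st: "vinner s t = 0"
  shows "\<exists>r\<ge>2. trace P = complex_of_real r"
proof -
  note p1 = orth_proj_deflate[OF hP Ps s0]
  note p2 = orth_proj_deflate[OF p1(1) p1(3)[OF Pt st] t0]
  let ?Q = "P - outer s - outer t"
  have "trace ?Q = trace P - 2" using p2(2) p1(2) by simp
  moreover have "trace ?Q = complex_of_real (\<Sum>i\<in>UNIV. \<Sum>j\<in>UNIV. (cmod (?Q$i$j))^2)"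
    using orth_proj_hs_self[OF p2(1)] hs_self[of ?Q] by simp
  moreover have "0 \<le> (\<Sum>i\<in>UNIV. \<Sum>j\<in>UNIV. (cmod (?Q$i$j))^2)" by (intro sum_nonneg) simp
  ultimately show ?thesis
    by (intro exI[of _ "(\<Sum>i\<in>UNIV. \<Sum>j\<in>UNIV. (cmod (?Q$i$j))^2) + 2"]) (simp add: algebra_simps)
qed

text \<open>Equality criterion: a matrix T whose overlaps with an orthogonal projection P both
  equal tr P and whose squared norm does not exceed tr P is P itself,
  since then \<langle>T - P, T - P\<rangle> = \<langle>T, T\<rangle> - tr P \<le> 0.\<close>
lemma orth_proj_eqI:
  fixes P T :: "complex^'k::finite^'k"
  assumes "orth_proj P" "hs T P = trace P" "hs P T = trace P"
    and "hs T T = complex_of_real r" "trace P = complex_of_real p" "r \<le> p"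
  shows "T = P"
proof -
  have "hs (T - P) (T - P) = complex_of_real (r - p)"
    using assms(1-5) by (simp add: hs_diff orth_proj_hs_self)
  then have "T - P = 0" using assms(6) by (intro hs_self_nonpos_imp_zero[of _ "r - p"]) auto
  then show ?thesis by simp
qed

section \<open>The representation \<rho>(X) = X \<otimes> X \<otimes> conj X \<otimes> conj X\<close>

type_synonym 'n idx4 = "'n \<times> 'n \<times> 'n \<times> 'n"

definition rho :: "complex^'n^'n \<Rightarrow> complex^('n idx4)^('n idx4)" where
  "rho X = (\<chi> i j. case i of (i1,i2,i3,i4) \<Rightarrow> case j of (j1,j2,j3,j4) \<Rightarrow>
       X$i1$j1 * X$i2$j2 * cnj (X$i3$j3) * cnj (X$i4$j4))"

lemma rho_nth [simp]: "rho X $ (i1,i2,i3,i4) $ (j1,j2,j3,j4) =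
   X$i1$j1 * X$i2$j2 * cnj (X$i3$j3) * cnj (X$i4$j4)"
  by (simp add: rho_def)

lemma tensor4_entry_rho: "tensor4_entry X X (cadj X) (cadj X) (i1,i2,i3,i4) (j1,j2,j3,j4) =
   rho X $ (i1,i2,j3,j4) $ (j1,j2,i3,i4)"
  by (simp add: tensor4_entry_def)

lemma sum_idx4: "(\<Sum>k\<in>(UNIV::('n::finite) idx4 set). f k) =
   (\<Sum>a\<in>UNIV. \<Sum>b\<in>UNIV. \<Sum>c\<in>UNIV. \<Sum>d\<in>UNIV. f (a,b,c,d))"
  by (simp add: sum.cartesian_product UNIV_Times_UNIV[symmetric] del: UNIV_Times_UNIV)

lemma sum_product4: "sum f A * (sum g B * (sum h C * sum k D)) =
  (\<Sum>a\<in>A. \<Sum>b\<in>B. \<Sum>c\<in>C. \<Sum>d\<in>D. (f a * (g b * (h c * k d)) :: complex))"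
  by (simp only: sum_distrib_right) (simp only: sum_distrib_left)

lemma rho_mult: "rho (A ** B) = rho A ** rho B"
proof -
  have "rho (A ** B) $ i $ j = (rho A ** rho B) $ i $ j" for i j
  proof -
    obtain i1 i2 i3 i4 where i: "i = (i1,i2,i3,i4)" by (cases i) auto
    obtain j1 j2 j3 j4 where j: "j = (j1,j2,j3,j4)" by (cases j) auto
    show ?thesis unfolding i j
      by (simp add: matrix_matrix_mult_def sum_idx4 sum_product4[symmetric] mult.assoc)
         (simp only: sum_product4 mult_ac)
  qed
  then show ?thesis by (simp add: vec_eq_iff)
qed

lemma rho_cadj: "rho (cadj A) = cadj (rho A)"
proof -
  have "rho (cadj A) $ i $ j = cadj (rho A) $ i $ j" for i j
    by (cases i; cases j) auto
  then show ?thesis by (simp add: vec_eq_iff)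
qed

lemma trace_rho: "trace (rho A) = trace A ^ 2 * cnj (trace A) ^ 2"
  unfolding trace_def
  by (simp add: sum_idx4 sum_product4[symmetric] power2_eq_square mult.assoc)

lemma hs_rho: "hs (rho X) (rho Y) = trace (cadj X ** Y)^2 * cnj (trace (cadj X ** Y))^2"
  by (simp add: hs_trace rho_cadj[symmetric] rho_mult[symmetric] trace_rho)

lemma hs_rho_unbiased:
  assumes "(cmod (trace (cadj X ** Y)))^2 = 1"
  shows "hs (rho X) (rho Y) = 1"
proof -
  let ?t = "trace (cadj X ** Y)"
  have "(complex_of_real (cmod ?t))^2 = 1" using assms by (metis of_real_1 of_real_power)
  then have "cnj ?t * ?t = 1" by (simp add: cmod_sq_cnj)
  then show ?thesis by (simp add: hs_rho power_mult_distrib[symmetric] mult.commute)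
qed

lemma rho_entry_le:
  assumes "unitary_mat X"
  shows "cmod (rho X $ i $ j) \<le> 1"
proof -
  obtain i1 i2 i3 i4 where i: "i = (i1,i2,i3,i4)" by (cases i) auto
  obtain j1 j2 j3 j4 where j: "j = (j1,j2,j3,j4)" by (cases j) auto
  show ?thesis unfolding i j using unitary_entry_le[OF assms]
    by (simp add: norm_mult mult_le_one)
qed

lemma continuous_rho_entry: "continuous_on UNIV (\<lambda>X. rho X $ i $ j)"
proof -
  obtain i1 i2 i3 i4 where i: "i = (i1,i2,i3,i4)" by (cases i) auto
  obtain j1 j2 j3 j4 where j: "j = (j1,j2,j3,j4)" by (cases j) auto
  show ?thesis unfolding i j rho_nth by (intro continuous_intros)
qed

section \<open>Two invariant vectors of \<rho>\<close>

text \<open>The vectors of the identity pairing (k1 = k3, k2 = k4) and of the swap pairing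
  (k1 = k4, k2 = k3) of the four tensor factors; both are fixed by every \<rho>(X) with X
  unitary.  Their sum and difference are nonzero and orthogonal once d \<ge> 2.\<close>
definition id_pairing :: "complex^('n::finite idx4)" where
  "id_pairing = (\<chi> k. case k of (k1,k2,k3,k4) \<Rightarrow> if k1 = k3 \<and> k2 = k4 then 1 else 0)"

definition swap_pairing :: "complex^('n::finite idx4)" where
  "swap_pairing = (\<chi> k. case k of (k1,k2,k3,k4) \<Rightarrow> if k1 = k4 \<and> k2 = k3 then 1 else 0)"

lemma id_pairing_nth [simp]:
  "id_pairing $ (k1,k2,k3,k4) = (if k1 = k3 \<and> k2 = k4 then 1 else 0)"
  by (simp add: id_pairing_def)

lemma swap_pairing_nth [simp]:
  "swap_pairing $ (k1,k2,k3,k4) = (if k1 = k4 \<and> k2 = k3 then 1 else 0)"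
  by (simp add: swap_pairing_def)

lemma sum_delta2:
  "(\<Sum>k3\<in>(UNIV::'a::finite set). \<Sum>k4\<in>(UNIV::'a set). F k3 k4 * (if k1 = k3 \<and> k2 = k4 then 1 else 0))
   = (F k1 k2 :: complex)"
proof -
  have "(\<Sum>k3\<in>(UNIV::'a set). \<Sum>k4\<in>(UNIV::'a set). F k3 k4 * (if k1 = k3 \<and> k2 = k4 then 1 else 0))
     = (\<Sum>k3\<in>UNIV. if k1 = k3 then F k3 k2 else 0)"
    by (intro sum.cong refl) (auto simp: if_distrib cong: if_cong)
  also have "\<dots> = F k1 k2" by simp
  finally show ?thesis .
qed

lemma sum_delta2_swap:
  "(\<Sum>k3\<in>(UNIV::'a::finite set). \<Sum>k4\<in>(UNIV::'a set). F k3 k4 * (if k1 = k4 \<and> k2 = k3 then 1 else 0))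
   = (F k2 k1 :: complex)"
  using sum_delta2[of F k2 k1] by (simp add: conj_commute)

lemma rho_fix_id_pairing:
  assumes "unitary_mat X"
  shows "rho X *v id_pairing = id_pairing"
proof -
  have "(rho X *v id_pairing) $ i = id_pairing $ i" for i
  proof -
    obtain i1 i2 i3 i4 where i: "i = (i1,i2,i3,i4)" by (cases i) auto
    have "(rho X *v id_pairing) $ i =
        (\<Sum>k1\<in>UNIV. \<Sum>k2\<in>UNIV. X$i1$k1 * X$i2$k2 * cnj (X$i3$k1) * cnj (X$i4$k2))"
      unfolding i matrix_vector_mult_def by (simp add: sum_idx4 sum_delta2)
    also have "\<dots> = (\<Sum>k1\<in>UNIV. X$i1$k1 * cnj (X$i3$k1)) * (\<Sum>k2\<in>UNIV. X$i2$k2 * cnj (X$i4$k2))"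
      by (simp add: sum_product algebra_simps)
    also have "\<dots> = id_pairing $ i" using unitary_rows[OF assms] by (simp add: i)
    finally show ?thesis .
  qed
  then show ?thesis by (simp add: vec_eq_iff)
qed

lemma rho_fix_swap_pairing:
  assumes "unitary_mat X"
  shows "rho X *v swap_pairing = swap_pairing"
proof -
  have "(rho X *v swap_pairing) $ i = swap_pairing $ i" for i
  proof -
    obtain i1 i2 i3 i4 where i: "i = (i1,i2,i3,i4)" by (cases i) auto
    have "(rho X *v swap_pairing) $ i =
        (\<Sum>k1\<in>UNIV. \<Sum>k2\<in>UNIV. X$i1$k1 * X$i2$k2 * cnj (X$i3$k2) * cnj (X$i4$k1))"
      unfolding i matrix_vector_mult_def
      by (simp add: sum_idx4 sum_delta2_swap)
    also have "\<dots> = (\<Sum>k1\<in>UNIV. X$i1$k1 * cnj (X$i4$k1)) * (\<Sum>k2\<in>UNIV. X$i2$k2 * cnj (X$i3$k2))"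
      by (simp add: sum_product algebra_simps)
    also have "\<dots> = swap_pairing $ i" using unitary_rows[OF assms] by (auto simp: i)
    finally show ?thesis .
  qed
  then show ?thesis by (simp add: vec_eq_iff)
qed

lemma pairings_orthogonal:
  "vinner (id_pairing + swap_pairing) (id_pairing - swap_pairing :: complex^('n::finite idx4)) = 0"
proof -
  have sum_eq: "(\<Sum>k\<in>UNIV. (id_pairing :: complex^('n idx4)) $ k)
      = (\<Sum>k\<in>UNIV. (swap_pairing :: complex^('n idx4)) $ k)"
    by (simp only: sum_idx4 id_pairing_nth swap_pairing_nth)
      (rule sum.cong[OF refl], rule sum.cong[OF refl], rule sum.swap)
  have zero_one: "(id_pairing :: complex^('n idx4)) $ k \<in> {0, 1}"
      "(swap_pairing :: complex^('n idx4)) $ k \<in> {0, 1}" for k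
    by (cases k rule: prod_cases4, simp)+
  have cancel: "cnj (x + y) * (x - y) = x - y" if "x \<in> {0, 1}" "y \<in> {0, 1}" for x y :: complex
    using that by auto
  have pointwise: "cnj ((id_pairing + swap_pairing) $ k) * (id_pairing - swap_pairing) $ k
      = (id_pairing :: complex^('n idx4)) $ k - swap_pairing $ k" for k
    using cancel[OF zero_one] by simp
  show ?thesis unfolding vinner_def pointwise by (simp add: sum_subtractf sum_eq)
qed

lemma pairings_nonzero:
  assumes "CARD('n::finite) \<ge> 2"
  shows "(id_pairing :: complex^('n idx4)) + swap_pairing \<noteq> 0"
    and "(id_pairing :: complex^('n idx4)) - swap_pairing \<noteq> 0"
proof -
  obtain u v :: 'n where uv: "u \<noteq> v"
    using assms card_le_Suc0_iff_eq[of "UNIV :: 'n set"] by auto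
  have "((id_pairing :: complex^('n idx4)) + swap_pairing) $ (u,u,u,u) = 2" by simp
  then show "(id_pairing :: complex^('n idx4)) + swap_pairing \<noteq> 0" by (intro notI) simp
  have "((id_pairing :: complex^('n idx4)) - swap_pairing) $ (u,v,v,u) = -1" using uv by simp
  then show "(id_pairing :: complex^('n idx4)) - swap_pairing \<noteq> 0" by (intro notI) simp
qed

section \<open>The Haar average of \<rho>\<close>

lemma (in prob_space) integral_AE_eq_const:
  fixes f :: "'a \<Rightarrow> complex"
  assumes "f \<in> borel_measurable M" "AE x in M. f x = c"
  shows "(\<integral>x. f x \<partial>M) = c"
proof -
  have "(\<integral>x. f x \<partial>M) = (\<integral>x. c \<partial>M)" using assms by (intro integral_cong_AE) auto
  then show ?thesis using prob_space by simp
qed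

lemma continuous_mult_left: "continuous_on UNIV (\<lambda>A::complex^'n::finite^'n. V ** A)"
  unfolding matrix_matrix_mult_def by (intro continuous_intros)

definition haar_avg :: "(complex^'n::finite^'n) measure \<Rightarrow> complex^('n idx4)^('n idx4)" where
  "haar_avg M = (\<chi> i j. \<integral>X. rho X $ i $ j \<partial>M)"

context
  fixes \<mu> :: "(complex^'n::finite^'n) measure"
  assumes haar: "haar_unitary \<mu>"
begin

lemma haar_prob_space: "prob_space \<mu>"
  using haar by (simp add: haar_unitary_def)

lemma haar_sets: "sets \<mu> = sets borel"
  using haar by (simp add: haar_unitary_def)

lemma haar_AE_unitary: "AE X in \<mu>. unitary_mat X"
proof -
  interpret prob_space \<mu> by (rule haar_prob_space)
  have "emeasure \<mu> {A. unitary_mat A} = 1" using haar by (simp add: haar_unitary_def)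
  then have "measure \<mu> {A. unitary_mat A} = 1" by (simp add: emeasure_eq_measure)
  then have "AE X in \<mu>. X \<in> {A. unitary_mat A}" by (rule AE_prob_1)
  then show ?thesis by simp
qed

lemma measurable_rho_entry: "(\<lambda>X. rho X $ i $ j) \<in> borel_measurable \<mu>"
  using borel_measurable_continuous_onI[OF continuous_rho_entry] measurable_cong_sets[OF haar_sets refl]
  by blast

lemma integrable_rho_entry: "integrable \<mu> (\<lambda>X. rho X $ i $ j)"
proof (rule finite_measure.integrable_const_bound[where B=1])
  show "finite_measure \<mu>" using haar_prob_space by (simp add: prob_space_def)
  show "AE X in \<mu>. norm (rho X $ i $ j) \<le> 1"
    using haar_AE_unitary by eventually_elim (rule rho_entry_le)
qed (rule measurable_rho_entry)

lemma haar_avg_mult_left: "(C ** haar_avg \<mu>) $ i $ j = (\<integral>X. (C ** rho X) $ i $ j \<partial>\<mu>)"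
  by (simp add: matrix_matrix_mult_def haar_avg_def integrable_rho_entry)

lemma haar_avg_mult_vec: "(haar_avg \<mu> *v v) $ i = (\<integral>X. (rho X *v v) $ i \<partial>\<mu>)"
  by (simp add: matrix_vector_mult_def haar_avg_def integrable_rho_entry)

lemma haar_integral_rho_invariant:
  assumes "unitary_mat V"
  shows "(\<integral>X. rho (V ** X) $ i $ j \<partial>\<mu>) = (\<integral>X. rho X $ i $ j \<partial>\<mu>)"
proof -
  have distr_eq: "distr \<mu> borel (\<lambda>A. V ** A) = \<mu>" using haar assms by (simp add: haar_unitary_def)
  have "(\<lambda>A. V ** A) \<in> measurable \<mu> borel"
    using borel_measurable_continuous_onI[OF continuous_mult_left]
      measurable_cong_sets[OF haar_sets refl] by blast
  then have "(\<integral>X. rho X $ i $ j \<partial>(distr \<mu> borel (\<lambda>A. V ** A))) = (\<integral>X. rho (V ** X) $ i $ j \<partial>\<mu>)"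
    by (rule integral_distr[OF _ borel_measurable_continuous_onI[OF continuous_rho_entry]])
  then show ?thesis by (simp add: distr_eq)
qed

lemma rho_mult_haar_avg:
  assumes "unitary_mat V"
  shows "rho V ** haar_avg \<mu> = haar_avg \<mu>"
proof -
  have "(rho V ** haar_avg \<mu>) $ i $ j = haar_avg \<mu> $ i $ j" for i j
    by (simp add: haar_avg_mult_left rho_mult[symmetric] haar_integral_rho_invariant[OF assms])
      (simp add: haar_avg_def)
  then show ?thesis by (simp add: vec_eq_iff)
qed

lemma cadj_haar_avg_mult_rho:
  assumes "unitary_mat X"
  shows "cadj (haar_avg \<mu>) ** rho X = cadj (haar_avg \<mu>)"
proof -
  have "cadj (haar_avg \<mu>) ** rho X = cadj (rho (cadj X) ** haar_avg \<mu>)"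
    by (simp add: cadj_mult rho_cadj)
  also have "rho (cadj X) ** haar_avg \<mu> = haar_avg \<mu>"
    by (rule rho_mult_haar_avg[OF unitary_cadj[OF assms]])
  finally show ?thesis .
qed

text \<open>Averaging the previous identity over X gives P\<dagger> P = P\<dagger>, so P is an orthogonal projection.\<close>
lemma cadj_haar_avg_mult: "cadj (haar_avg \<mu>) ** haar_avg \<mu> = cadj (haar_avg \<mu>)"
proof -
  interpret prob_space \<mu> by (rule haar_prob_space)
  have "(\<integral>X. (cadj (haar_avg \<mu>) ** rho X) $ i $ j \<partial>\<mu>) = cadj (haar_avg \<mu>) $ i $ j" for i j
  proof (rule integral_AE_eq_const)
    show "(\<lambda>X. (cadj (haar_avg \<mu>) ** rho X) $ i $ j) \<in> borel_measurable \<mu>"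
      unfolding matrix_matrix_mult_def using measurable_rho_entry by simp
    show "AE X in \<mu>. (cadj (haar_avg \<mu>) ** rho X) $ i $ j = cadj (haar_avg \<mu>) $ i $ j"
      using haar_AE_unitary by eventually_elim (simp add: cadj_haar_avg_mult_rho)
  qed
  then show ?thesis by (simp add: vec_eq_iff haar_avg_mult_left)
qed

lemma haar_avg_orth_proj: "orth_proj (haar_avg \<mu>)"
proof -
  have "haar_avg \<mu> = cadj (cadj (haar_avg \<mu>) ** haar_avg \<mu>)"
    by (simp add: cadj_haar_avg_mult)
  also have "\<dots> = cadj (haar_avg \<mu>) ** haar_avg \<mu>" by (simp add: cadj_mult)
  also have "\<dots> = cadj (haar_avg \<mu>)" by (rule cadj_haar_avg_mult)
  finally have "cadj (haar_avg \<mu>) = haar_avg \<mu>" by simp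
  then show ?thesis using cadj_haar_avg_mult by (simp add: orth_proj_def)
qed

lemma haar_avg_fix:
  assumes "\<And>X. unitary_mat X \<Longrightarrow> rho X *v v = v"
  shows "haar_avg \<mu> *v v = v"
proof -
  interpret prob_space \<mu> by (rule haar_prob_space)
  have "(\<integral>X. (rho X *v v) $ i \<partial>\<mu>) = v $ i" for i
  proof (rule integral_AE_eq_const)
    show "(\<lambda>X. (rho X *v v) $ i) \<in> borel_measurable \<mu>"
      unfolding matrix_vector_mult_def using measurable_rho_entry by simp
    show "AE X in \<mu>. (rho X *v v) $ i = v $ i"
      using haar_AE_unitary by eventually_elim (simp add: assms)
  qed
  then show ?thesis by (simp add: vec_eq_iff haar_avg_mult_vec)
qed

lemma haar_avg_trace_ge_2:
  assumes "CARD('n) \<ge> 2"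
  shows "\<exists>r\<ge>2. trace (haar_avg \<mu>) = complex_of_real r"
proof (rule orth_proj_trace_ge_2[OF haar_avg_orth_proj _ _ pairings_nonzero[OF assms] pairings_orthogonal])
  show "haar_avg \<mu> *v (id_pairing + swap_pairing) = id_pairing + swap_pairing"
    by (rule haar_avg_fix) (simp add: matrix_vector_right_distrib rho_fix_id_pairing rho_fix_swap_pairing)
  show "haar_avg \<mu> *v (id_pairing - swap_pairing) = id_pairing - swap_pairing"
    by (rule haar_avg_fix) (simp add: matrix_vector_mult_diff_distrib rho_fix_id_pairing rho_fix_swap_pairing)
qed

lemma hs_rho_haar_avg:
  assumes "unitary_mat X"
  shows "hs (rho X) (haar_avg \<mu>) = trace (haar_avg \<mu>)"
    and "hs (haar_avg \<mu>) (rho X) = trace (haar_avg \<mu>)"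
proof -
  have herm: "cadj (haar_avg \<mu>) = haar_avg \<mu>"
    using haar_avg_orth_proj by (simp add: orth_proj_def)
  show "hs (rho X) (haar_avg \<mu>) = trace (haar_avg \<mu>)"
    by (simp add: hs_trace rho_cadj[symmetric] rho_mult_haar_avg[OF unitary_cadj[OF assms]])
  show "hs (haar_avg \<mu>) (rho X) = trace (haar_avg \<mu>)"
    using cadj_haar_avg_mult_rho[OF assms] by (simp add: hs_trace herm)
qed

end

section \<open>Design averages and their frame potential\<close>

definition design_avg :: "'b set \<Rightarrow> ('b \<Rightarrow> complex^'n::finite^'n) \<Rightarrow> complex^('n idx4)^('n idx4)" where
  "design_avg S W = (\<chi> i j. (\<Sum>x\<in>S. rho (W x) $ i $ j) / of_nat (card S))"

lemma sum_swap3: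
  "(\<Sum>i\<in>A. \<Sum>j\<in>B. \<Sum>x\<in>S. g x i j) = (\<Sum>x\<in>S. \<Sum>i\<in>A. \<Sum>j\<in>B. (g x i j :: complex))"
proof -
  have "(\<Sum>i\<in>A. \<Sum>j\<in>B. \<Sum>x\<in>S. g x i j) = (\<Sum>i\<in>A. \<Sum>x\<in>S. \<Sum>j\<in>B. g x i j)"
    by (rule sum.cong[OF refl], rule sum.swap)
  also have "\<dots> = (\<Sum>x\<in>S. \<Sum>i\<in>A. \<Sum>j\<in>B. g x i j)" by (rule sum.swap)
  finally show ?thesis .
qed

lemma hs_design_avg_left:
  "hs (design_avg S W) B = (\<Sum>x\<in>S. hs (rho (W x)) B) / of_nat (card S)"
proof -
  have entry: "cnj (design_avg S W $ i $ j) * B $ i $ j =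
      (\<Sum>x\<in>S. cnj (rho (W x) $ i $ j) * B $ i $ j) / of_nat (card S)" for i j
    by (simp add: design_avg_def sum_distrib_right)
  have "hs (design_avg S W) B =
      (\<Sum>i\<in>UNIV. \<Sum>j\<in>UNIV. \<Sum>x\<in>S. cnj (rho (W x) $ i $ j) * B $ i $ j) / of_nat (card S)"
    unfolding hs_def entry by (simp only: sum_divide_distrib)
  also have "\<dots> = (\<Sum>x\<in>S. \<Sum>i\<in>UNIV. \<Sum>j\<in>UNIV. cnj (rho (W x) $ i $ j) * B $ i $ j) / of_nat (card S)"
    by (subst sum_swap3) (rule refl)
  finally show ?thesis by (simp only: hs_def)
qed

lemma hs_design_avg_right:
  "hs B (design_avg S W) = (\<Sum>x\<in>S. hs B (rho (W x))) / of_nat (card S)"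
proof -
  have entry: "cnj (B $ i $ j) * design_avg S W $ i $ j =
      (\<Sum>x\<in>S. cnj (B $ i $ j) * rho (W x) $ i $ j) / of_nat (card S)" for i j
    by (simp add: design_avg_def sum_distrib_left)
  have "hs B (design_avg S W) =
      (\<Sum>i\<in>UNIV. \<Sum>j\<in>UNIV. \<Sum>x\<in>S. cnj (B $ i $ j) * rho (W x) $ i $ j) / of_nat (card S)"
    unfolding hs_def entry by (simp only: sum_divide_distrib)
  also have "\<dots> = (\<Sum>x\<in>S. \<Sum>i\<in>UNIV. \<Sum>j\<in>UNIV. cnj (B $ i $ j) * rho (W x) $ i $ j) / of_nat (card S)"
    by (subst sum_swap3) (rule refl)
  finally show ?thesis by (simp only: hs_def)
qed

lemma hs_design_avg_self:
  "hs (design_avg S W) (design_avg S W) =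
     (\<Sum>x\<in>S. \<Sum>y\<in>S. hs (rho (W x)) (rho (W y))) / of_nat (card S)^2"
  by (simp only: hs_design_avg_left)
    (simp add: hs_design_avg_right sum_divide_distrib power2_eq_square)

lemma hs_design_avg_haar_avg:
  assumes haar: "haar_unitary \<mu>" and S: "finite S" "S \<noteq> {}"
    and unitary: "\<And>x. x \<in> S \<Longrightarrow> unitary_mat (W x)"
  shows "hs (design_avg S W) (haar_avg \<mu>) = trace (haar_avg \<mu>)"
    and "hs (haar_avg \<mu>) (design_avg S W) = trace (haar_avg \<mu>)"
proof -
  have card: "of_nat (card S) \<noteq> (0::complex)" using S by simp
  show "hs (design_avg S W) (haar_avg \<mu>) = trace (haar_avg \<mu>)"
    using card by (simp add: hs_design_avg_left hs_rho_haar_avg(1)[OF haar unitary])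
  show "hs (haar_avg \<mu>) (design_avg S W) = trace (haar_avg \<mu>)"
    using card by (simp add: hs_design_avg_right hs_rho_haar_avg(2)[OF haar unitary])
qed

lemma design_avg_eq_haar_avg:
  assumes haar: "haar_unitary \<mu>" and d2: "CARD('n::finite) \<ge> 2"
    and S: "finite S" "S \<noteq> {}"
    and unitary: "\<And>x. x \<in> S \<Longrightarrow> unitary_mat (W x :: complex^'n^'n)"
    and potential: "hs (design_avg S W) (design_avg S W) = 2"
  shows "design_avg S W = haar_avg \<mu>"
proof -
  obtain p where p: "p \<ge> 2" "trace (haar_avg \<mu>) = complex_of_real p"
    using haar_avg_trace_ge_2[OF haar d2] by blast
  have potential_real: "hs (design_avg S W) (design_avg S W) = complex_of_real 2"
    using potential by simp
  from orth_proj_eqI[OF haar_avg_orth_proj[OF haar] hs_design_avg_haar_avg[OF haar S unitary]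
      potential_real p(2) p(1)]
  show ?thesis .
qed

section \<open>Mutually unbiased bases\<close>

lemma sum_if_eq:
  assumes "finite A" "a \<in> A"
  shows "(\<Sum>b\<in>A. if a = b then x else y) = x + (of_nat (card A) - 1) * (y :: 'a::comm_ring_1)"
proof -
  have "(\<Sum>b\<in>A. if a = b then x else y) = (\<Sum>b\<in>A. y + (if a = b then x - y else 0))"
    by (rule sum.cong) auto
  also have "\<dots> = of_nat (card A) * y + (x - y)" using assms by (simp add: sum.distrib)
  finally show ?thesis by (simp add: algebra_simps)
qed

lemma mub_overlap:
  fixes U :: "nat \<Rightarrow> nat \<Rightarrow> complex^'n::finite^'n"
  assumes bases: "\<And>a. a < m \<Longrightarrow> unitary_operator_basis (U a)"
    and mub: "\<And>a b. a < m \<Longrightarrow> b < m \<Longrightarrow> a \<noteq> b \<Longrightarrow> mutually_unbiased (U a) (U b)"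
    and a: "a < m" "j < CARD('n)^2" and b: "b < m" "k < CARD('n)^2"
  shows "hs (rho (U a j)) (rho (U b k)) =
           (if a = b then (if j = k then of_nat CARD('n) ^ 4 else 0) else 1)"
proof (cases "a = b")
  case True
  then have "trace (cadj (U a j) ** U b k) = (if j = k then of_nat CARD('n) else 0)"
    using bases[OF a(1)] a b by (auto simp: unitary_operator_basis_def)
  then show ?thesis using True by (simp add: hs_rho)
next
  case False
  then have "(cmod (trace (cadj (U a j) ** U b k)))^2 = 1"
    using mub[OF a(1) b(1)] a b by (auto simp: mutually_unbiased_def)
  then show ?thesis using False by (simp add: hs_rho_unbiased)
qed

lemma mub_row_sum:
  fixes U :: "nat \<Rightarrow> nat \<Rightarrow> complex^'n::finite^'n"
  assumes bases: "\<And>a. a < m \<Longrightarrow> unitary_operator_basis (U a)"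
    and mub: "\<And>a b. a < m \<Longrightarrow> b < m \<Longrightarrow> a \<noteq> b \<Longrightarrow> mutually_unbiased (U a) (U b)"
    and a: "a < m" "j < CARD('n)^2"
  shows "(\<Sum>y\<in>{..<m} \<times> {..<CARD('n)^2}. hs (rho (U a j)) (rho (case_prod U y))) =
           of_nat CARD('n) ^ 4 + (of_nat m - 1) * of_nat CARD('n) ^ 2"
proof -
  have "(\<Sum>y\<in>{..<m} \<times> {..<CARD('n)^2}. hs (rho (U a j)) (rho (case_prod U y))) =
      (\<Sum>b<m. \<Sum>k<CARD('n)^2. hs (rho (U a j)) (rho (U b k)))"
    by (simp add: sum.cartesian_product split_def)
  also have "\<dots> = (\<Sum>b<m. if a = b then of_nat CARD('n) ^ 4 else of_nat CARD('n) ^ 2)"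
  proof (rule sum.cong[OF refl])
    fix b assume "b \<in> {..<m}"
    then have "(\<Sum>k<CARD('n)^2. hs (rho (U a j)) (rho (U b k))) =
        (\<Sum>k<CARD('n)^2. if a = b then (if j = k then of_nat CARD('n) ^ 4 else 0) else 1)"
      using mub_overlap[where m=m and U=U, OF bases mub a] by (intro sum.cong) auto
    then show "(\<Sum>k<CARD('n)^2. hs (rho (U a j)) (rho (U b k))) =
        (if a = b then of_nat CARD('n) ^ 4 else of_nat CARD('n) ^ 2)"
      using a(2) by simp
  qed
  also have "\<dots> = of_nat CARD('n) ^ 4 + (of_nat m - 1) * of_nat CARD('n) ^ 2"
    using a by (simp add: sum_if_eq)
  finally show ?thesis .
qed

text \<open>The frame potential of m \<ge> 1 pairwise mutually unbiased unitary operator bases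
  is (d^2 + m - 1) / m; it equals the Haar value 2 exactly for a complete set m = d^2 - 1.\<close>
lemma mub_frame_potential:
  fixes U :: "nat \<Rightarrow> nat \<Rightarrow> complex^'n::finite^'n"
  assumes bases: "\<And>a. a < m \<Longrightarrow> unitary_operator_basis (U a)"
    and mub: "\<And>a b. a < m \<Longrightarrow> b < m \<Longrightarrow> a \<noteq> b \<Longrightarrow> mutually_unbiased (U a) (U b)"
    and m: "m \<ge> 1"
  defines "T \<equiv> design_avg ({..<m} \<times> {..<CARD('n)^2}) (case_prod U)"
  shows "hs T T = (of_nat CARD('n) ^ 2 + of_nat m - 1) / of_nat m"
proof -
  define D :: complex where "D = of_nat CARD('n)"
  let ?S = "{..<m} \<times> {..<CARD('n)^2}"
  have row: "(\<Sum>y\<in>?S. hs (rho (case_prod U x)) (rho (case_prod U y))) = D^4 + (of_nat m - 1) * D^2"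
    if "x \<in> ?S" for x
    using that mub_row_sum[where m=m and U=U, OF bases mub] by (auto simp: D_def)
  let ?Z = "D^2 + of_nat m - 1"
  have X0: "of_nat m * D^2 \<noteq> 0" using m by (simp add: D_def)
  have card: "of_nat (card ?S) = of_nat m * D^2" by (simp add: D_def)
  have "hs T T = of_nat (card ?S) * (D^4 + (of_nat m - 1) * D^2) / of_nat (card ?S)^2"
    unfolding T_def hs_design_avg_self by (simp add: row)
  also have "\<dots> = (of_nat m * D^2) * (D^2 * ?Z) / ((of_nat m * D^2) * (of_nat m * D^2))"
    unfolding card by (simp add: power2_eq_square power4_eq_xxxx algebra_simps)
  also have "\<dots> = (D^2 * ?Z) / (of_nat m * D^2)"
    using X0 by simp
  also have "\<dots> = ?Z / of_nat m"
    using X0 by simp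
  finally show ?thesis by (simp add: D_def)
qed

lemma complete_mub_design_avg_eq_haar_avg:
  fixes U :: "nat \<Rightarrow> nat \<Rightarrow> complex^'n::finite^'n"
  assumes d2: "CARD('n) \<ge> 2"
    and bases: "\<And>a. a < CARD('n)^2 - 1 \<Longrightarrow> unitary_operator_basis (U a)"
    and mub: "\<And>a b. a < CARD('n)^2 - 1 \<Longrightarrow> b < CARD('n)^2 - 1 \<Longrightarrow> a \<noteq> b
                 \<Longrightarrow> mutually_unbiased (U a) (U b)"
    and haar: "haar_unitary \<mu>"
  shows "design_avg ({..<CARD('n)^2 - 1} \<times> {..<CARD('n)^2}) (case_prod U) = haar_avg \<mu>"
proof -
  define m where "m = CARD('n)^2 - 1"
  define S where "S = {..<m} \<times> {..<CARD('n)^2}"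
  define D :: complex where "D = of_nat CARD('n)"
  have m_ge: "m \<ge> 3" using d2 power_mono[OF d2, of 2] by (simp add: m_def)
  have of_nat_m: "of_nat m = D^2 - 1" using m_ge by (simp add: m_def D_def)
  have "hs (design_avg S (case_prod U)) (design_avg S (case_prod U)) = (D^2 + (D^2 - 1) - 1) / (D^2 - 1)"
    using mub_frame_potential[where m=m and U=U, OF bases mub] m_ge of_nat_m
    by (simp add: S_def m_def D_def)
  also have "\<dots> = 2"
  proof -
    have "D^2 - 1 \<noteq> 0" using m_ge of_nat_m by auto
    then show ?thesis by (simp add: field_simps)
  qed
  finally have potential: "hs (design_avg S (case_prod U)) (design_avg S (case_prod U)) = 2" .
  have "(0, 0) \<in> S" using m_ge d2 by (simp add: S_def)
  then have S_ne: "S \<noteq> {}" by blast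
  have unitary: "unitary_mat (case_prod U x)" if "x \<in> S" for x
    using that bases by (auto simp: S_def m_def unitary_operator_basis_def)
  show ?thesis
    using design_avg_eq_haar_avg[OF haar d2 _ S_ne unitary potential] by (simp add: S_def m_def)
qed

lemma tensor4_average_eq_haar_integral:
  fixes U :: "nat \<Rightarrow> nat \<Rightarrow> complex^'n::finite^'n"
  assumes twirl: "design_avg ({..<m} \<times> {..<CARD('n)^2}) (case_prod U) = haar_avg \<mu>"
  shows "(1 / (of_nat (CARD('n)^2 * m))) *
      (\<Sum>a < m. \<Sum>j < CARD('n)^2. tensor4_entry (U a j) (U a j) (cadj (U a j)) (cadj (U a j)) I J)
    = (\<integral>X. tensor4_entry X X (cadj X) (cadj X) I J \<partial>\<mu>)"
proof -
  obtain i1 i2 i3 i4 j1 j2 j3 j4 where I: "I = (i1,i2,i3,i4)" and J: "J = (j1,j2,j3,j4)"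
    by (cases I; cases J) auto
  have "(1 / (of_nat (CARD('n)^2 * m))) *
      (\<Sum>a < m. \<Sum>j < CARD('n)^2. tensor4_entry (U a j) (U a j) (cadj (U a j)) (cadj (U a j)) I J)
      = design_avg ({..<m} \<times> {..<CARD('n)^2}) (case_prod U) $ (i1,i2,j3,j4) $ (j1,j2,i3,i4)"
    by (simp add: I J tensor4_entry_rho design_avg_def sum.cartesian_product split_def mult.commute)
  also have "\<dots> = (\<integral>X. tensor4_entry X X (cadj X) (cadj X) I J \<partial>\<mu>)"
    by (simp add: twirl haar_avg_def I J tensor4_entry_rho)
  finally show ?thesis .
qed

theorem mainTheorem9:
  fixes U :: "nat \<Rightarrow> nat \<Rightarrow> complex^'n^'n"
    and \<mu> :: "(complex^'n^'n) measure"
  assumes d2: "CARD('n) \<ge> 2"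
    and bases: "\<And>a. a < CARD('n)^2 - 1 \<Longrightarrow> unitary_operator_basis (U a)"
    and mub: "\<And>a b. a < CARD('n)^2 - 1 \<Longrightarrow> b < CARD('n)^2 - 1 \<Longrightarrow> a \<noteq> b
                 \<Longrightarrow> mutually_unbiased (U a) (U b)"
    and haar: "haar_unitary \<mu>"
  shows "\<forall>I J. (1 / (of_nat (CARD('n)^2 * (CARD('n)^2 - 1))) *
      (\<Sum>a < CARD('n)^2 - 1. \<Sum>j < CARD('n)^2.
         tensor4_entry (U a j) (U a j) (cadj (U a j)) (cadj (U a j)) I J))
    = (\<integral>X. tensor4_entry X X (cadj X) (cadj X) I J \<partial>\<mu>)"
proof (intro allI)
  fix I J
  have "design_avg ({..<CARD('n)^2 - 1} \<times> {..<CARD('n)^2}) (case_prod U) = haar_avg \<mu>"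
    by (rule complete_mub_design_avg_eq_haar_avg[where U=U, OF d2 bases mub haar])
  then show "(1 / (of_nat (CARD('n)^2 * (CARD('n)^2 - 1))) *
      (\<Sum>a < CARD('n)^2 - 1. \<Sum>j < CARD('n)^2.
         tensor4_entry (U a j) (U a j) (cadj (U a j)) (cadj (U a j)) I J))
    = (\<integral>X. tensor4_entry X X (cadj X) (cadj X) I J \<partial>\<mu>)"
    by (rule tensor4_average_eq_haar_integral)
qed

end
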